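(* Let $\mathbb{M}$ be a monster model of $T_{\mathrm{Ham}}$ with underlying set $G_\infty$, and let $I=I_1+(c)+I_2$ be an ordered index set with $I_1,I_2$ infinite. Let $(a_ia_i')_{i\in I}$ be an indiscernible sequence from $G\times v(G)$ such that $(a_i)_{i\in I}$ and $(a_i')_{i\in I}$ are each nonconstant, and let $b\in G$ be such that $(a_ia_i')_{i\in I_1+I_2}$ is $b$-indiscernible. If $v(a_i-b)=a_i'$ for all $i\neq c$, then $v(a_c-b)=a_c'$.
   Context: Let $C$ be an ordered field. A Hamel space over $C$ is a $C$-vector space $G$ with two total orderings $<_0,<_1$, each making $G$ an ordered $C$-vector space, and a map $v:G\to G_\infty=G\cup\{\infty\}$ ($G<_0\infty$, $G<_1\infty$) such that for all $x,y\in G$, $\lambda\in C^{\times}$: $v(x)=\infty$ iff $x=0$; $v(x+y)\ge_0\min_0(v(x),v(y))$; $v(\lambda x)=v(x)$; $0<_1x<_1y\Rightarrow v(x)\ge_0v(y)$; $v(v(x))=v(x)$ (with $v(\infty)=\infty$); $v(x)>_10$. It is independent if for all $a_0<_0b_0$, $a_1<_1b_1$ in $G\cup\{\pm\infty\}$ some $z\in G$ has $a_0<_0z<_0b_0$, $a_1<_1z<_1b_1$; dense if for all $a<_0b$ in $G$ some $c$ has $a<_0v(c)<_0b$. $T_{\mathrm{Ham}}$ is the complete theory in the language $\{0,+,(\lambda_c)_{c\in C},<_0,<_1,v,\infty\}$ on universe $G_\infty$ (with $\infty$ absorbing for $+$, $\lambda_c$, $v$) whose models are exactly the independent dense Hamel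 spaces over $C$. Indiscernible means $\emptyset$-indiscernible. *)

theory Defs
  imports Main "HOL.Vector_Spaces"
begin

section \<open>Extended orders on G_infinity = 'g option (None = infinity, above everything)\<close>

fun lt_ext :: "('g \<Rightarrow> 'g \<Rightarrow> bool) \<Rightarrow> 'g option \<Rightarrow> 'g option \<Rightarrow> bool" where
  "lt_ext lt (Some x) (Some y) = lt x y"
| "lt_ext lt (Some x) None = True"
| "lt_ext lt None y = False"

definition le_ext :: "('g \<Rightarrow> 'g \<Rightarrow> bool) \<Rightarrow> 'g option \<Rightarrow> 'g option \<Rightarrow> bool" where
  "le_ext lt a b \<longleftrightarrow> a = b \<or> lt_ext lt a b"

definition min_ext :: "('g \<Rightarrow> 'g \<Rightarrow> bool) \<Rightarrow> 'g option \<Rightarrow> 'g option \<Rightarrow> 'g option" where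
  "min_ext lt a b = (if le_ext lt a b then a else b)"

fun v_ext :: "('g \<Rightarrow> 'g option) \<Rightarrow> 'g option \<Rightarrow> 'g option" where
  "v_ext v None = None"
| "v_ext v (Some x) = v x"

definition ordered_vs :: "('c::linordered_field \<Rightarrow> 'g::ab_group_add \<Rightarrow> 'g) \<Rightarrow> ('g \<Rightarrow> 'g \<Rightarrow> bool) \<Rightarrow> bool" where
  "ordered_vs scale lt \<longleftrightarrow>
     (\<forall>x. \<not> lt x x) \<and>
     (\<forall>x y z. lt x y \<and> lt y z \<longrightarrow> lt x z) \<and>
     (\<forall>x y. x \<noteq> y \<longrightarrow> lt x y \<or> lt y x) \<and>
     (\<forall>x y z. lt x y \<longrightarrow> lt (x + z) (y + z)) \<and>
     (\<forall>x l. lt 0 x \<and> 0 < l \<longrightarrow> lt 0 (scale l x))"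

definition hamel_space ::
  "('c::linordered_field \<Rightarrow> 'g::ab_group_add \<Rightarrow> 'g) \<Rightarrow> ('g \<Rightarrow> 'g \<Rightarrow> bool) \<Rightarrow> ('g \<Rightarrow> 'g \<Rightarrow> bool)
     \<Rightarrow> ('g \<Rightarrow> 'g option) \<Rightarrow> bool" where
  "hamel_space scale lt0 lt1 v \<longleftrightarrow>
     vector_space scale \<and> ordered_vs scale lt0 \<and> ordered_vs scale lt1 \<and>
     (\<forall>x. v x = None \<longleftrightarrow> x = 0) \<and>
     (\<forall>x y. le_ext lt0 (min_ext lt0 (v x) (v y)) (v (x + y))) \<and>
     (\<forall>x l. l \<noteq> 0 \<longrightarrow> v (scale l x) = v x) \<and>
     (\<forall>x y. lt1 0 x \<and> lt1 x y \<longrightarrow> le_ext lt0 (v y) (v x)) \<and>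
     (\<forall>x. v_ext v (v x) = v x) \<and>
     (\<forall>x. lt_ext lt1 (Some 0) (v x))"

text \<open>Independence: endpoints in G \<union> {-infinity, +infinity}; a lower endpoint None means
  -infinity, an upper endpoint None means +infinity.\<close>
definition above :: "('g \<Rightarrow> 'g \<Rightarrow> bool) \<Rightarrow> 'g option \<Rightarrow> 'g \<Rightarrow> bool" where
  "above lt a z = (case a of None \<Rightarrow> True | Some x \<Rightarrow> lt x z)"

definition below :: "('g \<Rightarrow> 'g \<Rightarrow> bool) \<Rightarrow> 'g \<Rightarrow> 'g option \<Rightarrow> bool" where
  "below lt z b = (case b of None \<Rightarrow> True | Some y \<Rightarrow> lt z y)"

definition interval_ok :: "('g \<Rightarrow> 'g \<Rightarrow> bool) \<Rightarrow> 'g option \<Rightarrow> 'g option \<Rightarrow> bool" where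
  "interval_ok lt a b = (case (a, b) of (Some x, Some y) \<Rightarrow> lt x y | _ \<Rightarrow> True)"

definition independent_hs :: "('g \<Rightarrow> 'g \<Rightarrow> bool) \<Rightarrow> ('g \<Rightarrow> 'g \<Rightarrow> bool) \<Rightarrow> bool" where
  "independent_hs lt0 lt1 \<longleftrightarrow>
     (\<forall>a0 b0 a1 b1. interval_ok lt0 a0 b0 \<and> interval_ok lt1 a1 b1 \<longrightarrow>
        (\<exists>z. above lt0 a0 z \<and> below lt0 z b0 \<and> above lt1 a1 z \<and> below lt1 z b1))"

definition dense_hs :: "('g \<Rightarrow> 'g \<Rightarrow> bool) \<Rightarrow> ('g \<Rightarrow> 'g option) \<Rightarrow> bool" where
  "dense_hs lt0 v \<longleftrightarrow>
     (\<forall>a b. lt0 a b \<longrightarrow> (\<exists>c. lt_ext lt0 (Some a) (v c) \<and> lt_ext lt0 (v c) (Some b)))"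

datatype 'c tm = Var nat | Zero | Infty | Add "'c tm" "'c tm" | Smul 'c "'c tm" | Val "'c tm"

datatype 'c fm = Eq "'c tm" "'c tm" | Lt0 "'c tm" "'c tm" | Lt1 "'c tm" "'c tm"
  | Neg "'c fm" | Conj "'c fm" "'c fm" | Ex nat "'c fm"

fun eval_tm :: "('c \<Rightarrow> 'g::ab_group_add \<Rightarrow> 'g) \<Rightarrow> ('g \<Rightarrow> 'g option) \<Rightarrow> (nat \<Rightarrow> 'g option)
    \<Rightarrow> 'c tm \<Rightarrow> 'g option" where
  "eval_tm scale v e (Var k) = e k"
| "eval_tm scale v e Zero = Some 0"
| "eval_tm scale v e Infty = None"
| "eval_tm scale v e (Add s t) =
     (case (eval_tm scale v e s, eval_tm scale v e t) of (Some x, Some y) \<Rightarrow> Some (x + y) | _ \<Rightarrow> None)"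
| "eval_tm scale v e (Smul l t) = map_option (scale l) (eval_tm scale v e t)"
| "eval_tm scale v e (Val t) = v_ext v (eval_tm scale v e t)"

fun sat :: "('c \<Rightarrow> 'g::ab_group_add \<Rightarrow> 'g) \<Rightarrow> ('g \<Rightarrow> 'g \<Rightarrow> bool) \<Rightarrow> ('g \<Rightarrow> 'g \<Rightarrow> bool)
    \<Rightarrow> ('g \<Rightarrow> 'g option) \<Rightarrow> (nat \<Rightarrow> 'g option) \<Rightarrow> 'c fm \<Rightarrow> bool" where
  "sat scale lt0 lt1 v e (Eq s t) = (eval_tm scale v e s = eval_tm scale v e t)"
| "sat scale lt0 lt1 v e (Lt0 s t) = lt_ext lt0 (eval_tm scale v e s) (eval_tm scale v e t)"
| "sat scale lt0 lt1 v e (Lt1 s t) = lt_ext lt1 (eval_tm scale v e s) (eval_tm scale v e t)"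
| "sat scale lt0 lt1 v e (Neg \<phi>) = (\<not> sat scale lt0 lt1 v e \<phi>)"
| "sat scale lt0 lt1 v e (Conj \<phi> \<psi>) = (sat scale lt0 lt1 v e \<phi> \<and> sat scale lt0 lt1 v e \<psi>)"
| "sat scale lt0 lt1 v e (Ex k \<phi>) = (\<exists>x. sat scale lt0 lt1 v (e(k := x)) \<phi>)"

definition seq_env :: "nat \<Rightarrow> (nat \<Rightarrow> 'i) \<Rightarrow> ('i \<Rightarrow> 'g option) \<Rightarrow> ('i \<Rightarrow> 'g option)
    \<Rightarrow> (nat \<Rightarrow> 'g option) \<Rightarrow> nat \<Rightarrow> 'g option" where
  "seq_env n s x y p k =
     (if k < 2 * n then (if even k then x (s (k div 2)) else y (s (k div 2))) else p (k - 2 * n))"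

text \<open>The sequence (x_i y_i)_{i in J} is indiscernible over the parameter set B
  (parameters from B, plus the 0-definable constant infinity).\<close>
definition indisc_over :: "('c \<Rightarrow> 'g::ab_group_add \<Rightarrow> 'g) \<Rightarrow> ('g \<Rightarrow> 'g \<Rightarrow> bool) \<Rightarrow> ('g \<Rightarrow> 'g \<Rightarrow> bool)
    \<Rightarrow> ('g \<Rightarrow> 'g option) \<Rightarrow> 'i::linorder set \<Rightarrow> ('i \<Rightarrow> 'g option) \<Rightarrow> ('i \<Rightarrow> 'g option)
    \<Rightarrow> 'g set \<Rightarrow> bool" where
  "indisc_over scale lt0 lt1 v J x y B \<longleftrightarrow>
     (\<forall>(\<phi> :: 'c fm) n s t p.
        (\<forall>k<n. s k \<in> J \<and> t k \<in> J) \<and>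
        (\<forall>k l. k < l \<and> l < n \<longrightarrow> s k < s l \<and> t k < t l) \<and>
        (\<forall>k. p k \<in> insert None (Some ` B)) \<longrightarrow>
        (sat scale lt0 lt1 v (seq_env n s x y p) \<phi> \<longleftrightarrow> sat scale lt0 lt1 v (seq_env n t x y p) \<phi>))"

end

theory Submission
  imports Defs
begin

text \<open>Fix i < c < j. Since the valuations a'_i are pairwise distinct by indiscernibility, they
  are strictly monotone in <_0, say increasing. Then v(a_i - a_j) = v((a_i - b) - (a_j - b)) = a'_i
  by the strict ultrametric inequality, and this is a property of the pair (i, j) over the empty
  set, so it transfers to (c, j): v(a_c - a_j) = a'_c <_0 a'_j = v(a_j - b). Hence
  v(a_c - b) = v((a_c - a_j) + (a_j - b)) = a'_c. The decreasing case is symmetric, with i in place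
  of j.\<close>

lemma ordered_vsD:
  assumes "ordered_vs scale lt"
  shows "\<not> lt x x" "lt x y \<Longrightarrow> lt y z \<Longrightarrow> lt x z" "x \<noteq> y \<Longrightarrow> lt x y \<or> lt y x"
  using assms unfolding ordered_vs_def by blast+

lemma lt_ext_irrefl: "ordered_vs scale lt \<Longrightarrow> \<not> lt_ext lt a a"
  by (cases a) (auto dest: ordered_vsD(1))

lemma lt_ext_trans:
  "ordered_vs scale lt \<Longrightarrow> lt_ext lt a b \<Longrightarrow> lt_ext lt b d \<Longrightarrow> lt_ext lt a d"
  by (cases a; cases b; cases d) (auto dest: ordered_vsD(2))

lemma lt_ext_total: "ordered_vs scale lt \<Longrightarrow> a \<noteq> b \<Longrightarrow> lt_ext lt a b \<or> lt_ext lt b a"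
  by (cases a; cases b) (auto dest: ordered_vsD(3))

lemma hamel_spaceD:
  assumes "hamel_space scale lt0 lt1 v"
  shows "vector_space scale" "ordered_vs scale lt0"
    "le_ext lt0 (min_ext lt0 (v x) (v y)) (v (x + y))"
    "l \<noteq> 0 \<Longrightarrow> v (scale l x) = v x"
  using assms unfolding hamel_space_def by blast+

lemma vector_space_scale_minus_one: "vector_space scale \<Longrightarrow> scale (-1) x = - x"
  by (simp add: module.scale_minus_left module.scale_one module_iff_vector_space)

lemma hamel_space_v_uminus:
  assumes "hamel_space scale lt0 lt1 v"
  shows "v (- x) = v x"
  using hamel_spaceD(4)[OF assms, of "-1" x]
  by (simp add: vector_space_scale_minus_one[OF hamel_spaceD(1)[OF assms]])

lemma hamel_space_v_diff_commute:
  assumes "hamel_space scale lt0 lt1 v"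
  shows "v (x - y) = v (y - x)"
  by (metis minus_diff_eq hamel_space_v_uminus[OF assms])

lemma hamel_space_v_add_eq_left:
  assumes H: "hamel_space scale lt0 lt1 v" and xy: "lt_ext lt0 (v x) (v y)"
  shows "v (x + y) = v x"
proof (rule ccontr)
  have o: "ordered_vs scale lt0" using hamel_spaceD(2)[OF H] .
  assume "v (x + y) \<noteq> v x"
  moreover have "le_ext lt0 (v x) (v (x + y))"
    using hamel_spaceD(3)[OF H, of x y] xy unfolding min_ext_def le_ext_def by auto
  ultimately have "lt_ext lt0 (v x) (v (x + y))" unfolding le_ext_def by simp
  then have "lt_ext lt0 (v x) (min_ext lt0 (v (x + y)) (v (- y)))"
    using xy hamel_space_v_uminus[OF H, of y] unfolding min_ext_def by auto
  moreover have "le_ext lt0 (min_ext lt0 (v (x + y)) (v (- y))) (v x)"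
    using hamel_spaceD(3)[OF H, of "x + y" "- y"] by simp
  ultimately show False
    unfolding le_ext_def using lt_ext_irrefl[OF o] lt_ext_trans[OF o] by metis
qed

lemma hamel_space_v_diff_eq_left:
  assumes "hamel_space scale lt0 lt1 v" and "lt_ext lt0 (v x) (v y)"
  shows "v (x - y) = v x"
  using hamel_space_v_add_eq_left[OF assms(1), of x "- y"] assms
  by (simp add: hamel_space_v_uminus[OF assms(1)])

definition pair_env :: "('i \<Rightarrow> 'g option) \<Rightarrow> ('i \<Rightarrow> 'g option) \<Rightarrow> 'i \<Rightarrow> 'i \<Rightarrow> nat \<Rightarrow> 'g option"
  where "pair_env x y i j = seq_env 2 (\<lambda>n. if n = 0 then i else j) x y (\<lambda>_. None)"

lemma pair_env_simps [simp]:
  "pair_env x y i j 0 = x i" "pair_env x y i j (Suc 0) = y i"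
  "pair_env x y i j 2 = x j" "pair_env x y i j 3 = y j"
  by (simp_all add: pair_env_def seq_env_def)

lemma indisc_over_pair:
  assumes "indisc_over scale lt0 lt1 v J x y B"
    and "i \<in> J" "j \<in> J" "k \<in> J" "l \<in> J" "i < j" "k < l"
  shows "sat scale lt0 lt1 v (pair_env x y i j) \<phi> \<longleftrightarrow> sat scale lt0 lt1 v (pair_env x y k l) \<phi>"
  using assms(1)[unfolded indisc_over_def, rule_format, where \<phi> = \<phi> and n = 2
      and s = "\<lambda>n. if n = 0 then i else j" and t = "\<lambda>n. if n = 0 then k else l"
      and p = "\<lambda>_. None"] assms(2-)
  unfolding pair_env_def by auto

lemma indisc_over_monotone_or_antitone:
  assumes o: "ordered_vs scale lt0" and ind: "indisc_over scale lt0 lt1 v J x y B"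
    and nonconst: "\<exists>p\<in>J. \<exists>q\<in>J. y p \<noteq> y q"
  shows "(\<forall>i\<in>J. \<forall>j\<in>J. i < j \<longrightarrow> lt_ext lt0 (y i) (y j))
    \<or> (\<forall>i\<in>J. \<forall>j\<in>J. i < j \<longrightarrow> lt_ext lt0 (y j) (y i))"
proof -
  obtain p q where pq: "p \<in> J" "q \<in> J" "p < q" "y p \<noteq> y q"
    using nonconst by (metis linorder_neqE)
  have transfer: "sat scale lt0 lt1 v (pair_env x y i j) \<phi>"
    if "sat scale lt0 lt1 v (pair_env x y p q) \<phi>" "i \<in> J" "j \<in> J" "i < j" for i j \<phi>
    using indisc_over_pair[OF ind pq(1,2) that(2,3) pq(3) that(4)] that(1) by blast
  from lt_ext_total[OF o pq(4)] show ?thesis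
  proof
    assume "lt_ext lt0 (y p) (y q)"
    then show ?thesis using transfer[of "Lt0 (Var 1) (Var 3)"] by auto
  next
    assume "lt_ext lt0 (y q) (y p)"
    then show ?thesis using transfer[of "Lt0 (Var 3) (Var 1)"] by auto
  qed
qed

lemma indisc_over_v_diff_transfer:
  assumes vs: "vector_space scale"
    and ind: "indisc_over scale lt0 lt1 v J (\<lambda>i. Some (x i)) y B"
    and "i \<in> J" "j \<in> J" "k \<in> J" "l \<in> J" "i < j" "k < l"
  shows "v (x i - x j) = y i \<longleftrightarrow> v (x k - x l) = y k"
    and "v (x i - x j) = y j \<longleftrightarrow> v (x k - x l) = y l"
  using indisc_over_pair[OF ind assms(3-), of "Eq (Val (Add (Var 0) (Smul (-1) (Var 2)))) (Var 1)"]
    indisc_over_pair[OF ind assms(3-), of "Eq (Val (Add (Var 0) (Smul (-1) (Var 2)))) (Var 3)"]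
  by (simp_all add: vector_space_scale_minus_one[OF vs])

theorem lemma5p5:
  fixes scale :: "'c::linordered_field \<Rightarrow> 'g::ab_group_add \<Rightarrow> 'g"
    and lt0 lt1 :: "'g \<Rightarrow> 'g \<Rightarrow> bool"
    and v :: "'g \<Rightarrow> 'g option"
    and a :: "'i::linorder \<Rightarrow> 'g"
    and a' :: "'i \<Rightarrow> 'g option"
    and b :: 'g and c :: 'i
  assumes "hamel_space scale lt0 lt1 v"
    and "independent_hs lt0 lt1"
    and "dense_hs lt0 v"
    and "infinite {i. i < c}"
    and "infinite {i. c < i}"
    and "\<forall>i. a' i \<in> range v"
    and "indisc_over scale lt0 lt1 v UNIV (\<lambda>i. Some (a i)) a' {}"
    and "\<exists>i j. a i \<noteq> a j"
    and "\<exists>i j. a' i \<noteq> a' j"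
    and "indisc_over scale lt0 lt1 v (UNIV - {c}) (\<lambda>i. Some (a i)) a' {b}"
    and "\<forall>i. i \<noteq> c \<longrightarrow> v (a i - b) = a' i"
  shows "v (a c - b) = a' c"
proof -
  note H = assms(1) and ind = assms(7)
  obtain i j where "i < c" "c < j" using assms(4,5) by (metis empty_Collect_eq finite.emptyI)
  have vb: "v (a k - b) = a' k" if "k \<noteq> c" for k using assms(11) that by blast
  from indisc_over_monotone_or_antitone[OF hamel_spaceD(2)[OF H] ind] assms(9)
  consider "\<forall>k l. k < l \<longrightarrow> lt_ext lt0 (a' k) (a' l)" | "\<forall>k l. k < l \<longrightarrow> lt_ext lt0 (a' l) (a' k)"
    by auto
  then show ?thesis
  proof cases
    case 1
    have "v (a i - a j) = v ((a i - b) - (a j - b))" by simp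
    also have "\<dots> = v (a i - b)"
      using 1 vb \<open>i < c\<close> \<open>c < j\<close> by (intro hamel_space_v_diff_eq_left[OF H]) auto
    also have "\<dots> = a' i" using vb \<open>i < c\<close> by simp
    finally have "v (a c - a j) = a' c"
      using indisc_over_v_diff_transfer(1)[OF hamel_spaceD(1)[OF H] ind, of i j c j]
        \<open>i < c\<close> \<open>c < j\<close> by auto
    then show ?thesis
      using hamel_space_v_add_eq_left[OF H, of "a c - a j" "a j - b"] 1 vb[of j] \<open>c < j\<close> by auto
  next
    case 2
    have "v (a i - a j) = v ((a j - b) - (a i - b))"
      using hamel_space_v_diff_commute[OF H, of "a i" "a j"] by simp
    also have "\<dots> = v (a j - b)"
      using 2 vb \<open>i < c\<close> \<open>c < j\<close> by (intro hamel_space_v_diff_eq_left[OF H]) auto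
    also have "\<dots> = a' j" using vb \<open>c < j\<close> by simp
    finally have "v (a c - a i) = a' c"
      using indisc_over_v_diff_transfer(2)[OF hamel_spaceD(1)[OF H] ind, of i j i c] \<open>i < c\<close> \<open>c < j\<close>
        hamel_space_v_diff_commute[OF H, of "a c" "a i"] by auto
    then show ?thesis
      using hamel_space_v_add_eq_left[OF H, of "a c - a i" "a i - b"] 2 vb[of i] \<open>i < c\<close> by auto
  qed
qed

end
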